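(* Let $n\ge 1$, let $X:\mathbb{C}^n\to\mathbb{C}^n$ be a nilpotent linear operator, and fix $i$ with $1\le i\le n$. Suppose $h$ is a Hessenberg function with $h(i)=i$, and suppose that the function $h'$ defined by $h'(j)=h(j)$ for $j\neq i$ and $h'(i)=i-1$ is also a Hessenberg function. Then $\mathcal{H}(X,h)=\mathcal{H}(X,h')$.
   Context: A (full) flag in $\mathbb{C}^n$ is a chain $V_1\subseteq V_2\subseteq\cdots\subseteq V_n=\mathbb{C}^n$ with $\dim V_k=k$; the flag variety is $GL_n(\mathbb{C})/B$ where $B$ is the group of invertible upper-triangular matrices, and $[g]$ denotes the flag whose $k$-dimensional subspace is spanned by the first $k$ columns of $g$. A Hessenberg function is a nondecreasing function $h:\{1,\dots,n\}\to\{1,\dots,n\}$. Its Hessenberg space is $H_h=\operatorname{span}\{E_{kl}: k\le h(l)\}$, where $E_{kl}$ is the matrix unit with $1$ in entry $(k,l)$ and $0$ elsewhere. The Hessenberg variety of a linear operator $X$ and $h$ is $\mathcal{H}(X,h)=\{[g]: g^{-1}Xg\in H_h\}$, equivalently the set of flags with $XV_k\subseteq V_{h(k)}$ for all $k$. *)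

theory Defs
  imports "Jordan_Normal_Form.Matrix"
begin

text \<open>Conventions: C^n is modelled by complex vectors of dimension n (carrier_vec n),
 linear operators on C^n by n x n complex matrices. Matrix indices are 0-based in the
 library; the paper's 1-based indices k correspond to library index k-1.\<close>

definition hessenberg_function :: "nat \<Rightarrow> (nat \<Rightarrow> nat) \<Rightarrow> bool" where
  "hessenberg_function n h \<longleftrightarrow>
     (\<forall>j\<in>{1..n}. h j \<in> {1..n}) \<and> (\<forall>j\<in>{1..n}. \<forall>l\<in>{1..n}. j \<le> l \<longrightarrow> h j \<le> h l)"

text \<open>Hessenberg space H_h = span of E_{kl} with k <= h(l) (1-based), i.e. matrices
 whose (k,l) entry vanishes whenever k > h(l).\<close>
definition hessenberg_space :: "nat \<Rightarrow> (nat \<Rightarrow> nat) \<Rightarrow> complex mat set" where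
  "hessenberg_space n h = {M \<in> carrier_mat n n.
     \<forall>k<n. \<forall>l<n. h (l + 1) < k + 1 \<longrightarrow> M $$ (k, l) = 0}"

definition mat_inv :: "complex mat \<Rightarrow> complex mat" where
  "mat_inv g = (SOME B. inverts_mat g B \<and> inverts_mat B g)"

definition GL :: "nat \<Rightarrow> complex mat set" where
  "GL n = {g \<in> carrier_mat n n. invertible_mat g}"

text \<open>The flag [g]: its k-th subspace (k = 1..n) is the span of the first k columns of g,
 i.e. all vectors g v with v supported on the first k coordinates.\<close>
definition flag_of :: "nat \<Rightarrow> complex mat \<Rightarrow> nat \<Rightarrow> complex vec set" where
  "flag_of n g k = {g *\<^sub>v v | v. v \<in> carrier_vec n \<and> (\<forall>j<n. k \<le> j \<longrightarrow> v $ j = 0)}"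

definition nilpotent_mat :: "nat \<Rightarrow> complex mat \<Rightarrow> bool" where
  "nilpotent_mat n X \<longleftrightarrow> X \<in> carrier_mat n n \<and> (\<exists>m. X ^\<^sub>m m = 0\<^sub>m n n)"

definition hessenberg_variety :: "nat \<Rightarrow> complex mat \<Rightarrow> (nat \<Rightarrow> nat) \<Rightarrow> (nat \<Rightarrow> complex vec set) set" where
  "hessenberg_variety n X h =
     {flag_of n g | g. g \<in> GL n \<and> mat_inv g * X * g \<in> hessenberg_space n h}"

end

theory Submission
  imports Defs
begin

text \<open>Write \<open>p = i - 1\<close> for the 0-based index of the \<open>i\<close>-th coordinate. Since \<open>h'\<close> is a
  Hessenberg function, \<open>h j \<le> i - 1\<close> for \<open>j < i\<close>; together with \<open>h i = i\<close> this says that every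
  \<open>M \<in> H_h\<close> vanishes in rows \<open>\<ge> p\<close> and columns \<open>\<le> p\<close>, except possibly at the diagonal entry
  \<open>(p, p)\<close>. Hence \<open>M\<^sub>p\<^sub>p\<^sup>m\<close> is the \<open>(p, p)\<close> entry of \<open>M\<^sup>m\<close>. For \<open>M = g\<^sup>-\<^sup>1 X g\<close> with \<open>X\<close> nilpotent,
  \<open>M\<close> is nilpotent too, so \<open>M\<^sub>p\<^sub>p = 0\<close>, which is exactly the extra condition defining \<open>H_h'\<close>.\<close>

lemma mat_inv_GL:
  assumes "g \<in> GL n"
  shows "mat_inv g \<in> carrier_mat n n" "g * mat_inv g = 1\<^sub>m n" "mat_inv g * g = 1\<^sub>m n"
proof -
  have g: "g \<in> carrier_mat n n" and "invertible_mat g"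
    using assms by (auto simp: GL_def)
  then have "\<exists>B. inverts_mat g B \<and> inverts_mat B g"
    by (auto simp: invertible_mat_def)
  then have inv: "inverts_mat g (mat_inv g) \<and> inverts_mat (mat_inv g) g"
    unfolding mat_inv_def by (rule someI_ex)
  then have gB: "g * mat_inv g = 1\<^sub>m n" and Bg: "mat_inv g * g = 1\<^sub>m (dim_row (mat_inv g))"
    using g by (auto simp: inverts_mat_def)
  have "dim_col (mat_inv g) = n" "dim_row (mat_inv g) = n"
    using arg_cong[OF gB, of dim_col] arg_cong[OF Bg, of dim_col] g by auto
  then show "mat_inv g \<in> carrier_mat n n" by auto
  with gB Bg show "g * mat_inv g = 1\<^sub>m n" "mat_inv g * g = 1\<^sub>m n" by auto
qed

lemma nilpotent_mat_conjugate:
  assumes "nilpotent_mat n X" and "g \<in> GL n"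
  shows "nilpotent_mat n (mat_inv g * X * g)"
proof -
  have X: "X \<in> carrier_mat n n" and g: "g \<in> carrier_mat n n"
    using assms by (auto simp: nilpotent_mat_def GL_def)
  obtain m where Xm: "X ^\<^sub>m m = 0\<^sub>m n n"
    using assms(1) by (auto simp: nilpotent_mat_def)
  have B: "mat_inv g \<in> carrier_mat n n"
    using mat_inv_GL[OF assms(2)] by simp
  have "similar_mat_wit (mat_inv g * X * g) X (mat_inv g) g"
    using mat_inv_GL[OF assms(2)] X g by (intro similar_mat_witI) auto
  then have "(mat_inv g * X * g) ^\<^sub>m m = mat_inv g * X ^\<^sub>m m * g"
    by (rule similar_mat_wit_pow_id)
  also have "\<dots> = 0\<^sub>m n n"
    using B g by (simp add: Xm)
  finally show ?thesis
    using B X g by (auto simp: nilpotent_mat_def)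
qed

text \<open>The hypothesis says that \<open>V = span {e\<^sub>0, \<dots>, e\<^sub>p\<^sub>-\<^sub>1}\<close> is \<open>M\<close>-invariant and that
  \<open>M e\<^sub>p = M\<^sub>p\<^sub>p e\<^sub>p\<close> modulo \<open>V\<close>, so \<open>M\<^sub>p\<^sub>p\<close> is an eigenvalue of \<open>M\<close>.\<close>

lemma pow_mat_corner_block:
  fixes M :: "'a :: comm_semiring_1 mat"
  assumes M: "M \<in> carrier_mat n n"
    and corner: "\<And>k l. p \<le> k \<Longrightarrow> k < n \<Longrightarrow> l \<le> p \<Longrightarrow> (k, l) \<noteq> (p, p) \<Longrightarrow> M $$ (k, l) = 0"
    and kl: "p \<le> k" "k < n" "l \<le> p"
  shows "(M ^\<^sub>m m) $$ (k, l) = (if (k, l) = (p, p) then M $$ (p, p) ^ m else 0)"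
  using kl
proof (induction m arbitrary: k l)
  case 0
  then show ?case using M by auto
next
  case (Suc m)
  have "(M ^\<^sub>m Suc m) $$ (k, l) = (\<Sum>j<n. (M ^\<^sub>m m) $$ (k, j) * M $$ (j, l))"
    using M Suc.prems by (auto simp: scalar_prod_def lessThan_atLeast0 intro!: sum.cong)
  also have "\<dots> = (\<Sum>j\<in>{p}. (M ^\<^sub>m m) $$ (k, j) * M $$ (j, l))"
  proof (rule sum.mono_neutral_right)
    show "\<forall>j\<in>{..<n} - {p}. (M ^\<^sub>m m) $$ (k, j) * M $$ (j, l) = 0"
    proof
      fix j assume j: "j \<in> {..<n} - {p}"
      show "(M ^\<^sub>m m) $$ (k, j) * M $$ (j, l) = 0"
      proof (cases "j < p")
        case True
        then show ?thesis using Suc.IH[of k j] Suc.prems by simp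
      next
        case False
        then show ?thesis using corner[of j l] j Suc.prems by simp
      qed
    qed
  qed (use Suc.prems in auto)
  also have "\<dots> = (if (k, l) = (p, p) then M $$ (p, p) ^ Suc m else 0)"
  proof (cases "k = p")
    case True
    then show ?thesis
      using Suc.IH[of p p] Suc.prems corner[of p l] by (cases "l = p") (simp_all add: mult.commute)
  next
    case False
    then show ?thesis
      using Suc.IH[of k p] Suc.prems by simp
  qed
  finally show ?case .
qed

lemma nilpotent_corner_entry_eq_0:
  assumes "nilpotent_mat n M" and "p < n"
    and "\<And>k l. p \<le> k \<Longrightarrow> k < n \<Longrightarrow> l \<le> p \<Longrightarrow> (k, l) \<noteq> (p, p) \<Longrightarrow> M $$ (k, l) = 0"
  shows "M $$ (p, p) = 0"
proof -
  obtain m where M: "M \<in> carrier_mat n n" and Mm: "M ^\<^sub>m m = 0\<^sub>m n n"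
    using assms(1) by (auto simp: nilpotent_mat_def)
  have "M $$ (p, p) ^ m = (M ^\<^sub>m m) $$ (p, p)"
    using pow_mat_corner_block[OF M assms(3)] assms(2) by simp
  also have "\<dots> = 0"
    using Mm assms(2) by simp
  finally show ?thesis by simp
qed

lemma hessenberg_space_mono:
  assumes "\<And>j. j \<in> {1..n} \<Longrightarrow> h' j \<le> h j"
  shows "hessenberg_space n h' \<subseteq> hessenberg_space n h"
proof
  fix M assume M: "M \<in> hessenberg_space n h'"
  have "M $$ (k, l) = 0" if "k < n" "l < n" "h (l + 1) < k + 1" for k l
  proof -
    have "h' (l + 1) < k + 1" using assms[of "l + 1"] that by simp
    then show ?thesis using M that by (simp add: hessenberg_space_def)
  qed
  moreover have "M \<in> carrier_mat n n" using M by (simp add: hessenberg_space_def)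
  ultimately show "M \<in> hessenberg_space n h"
    by (simp add: hessenberg_space_def)
qed

lemma hessenberg_space_corner_block:
  assumes "hessenberg_function n (h(i := i - 1))" and "h i = i" and "1 \<le> i" "i \<le> n"
    and "M \<in> hessenberg_space n h"
    and "i - 1 \<le> k" "k < n" "l \<le> i - 1" "(k, l) \<noteq> (i - 1, i - 1)"
  shows "M $$ (k, l) = 0"
proof -
  have "h (l + 1) < k + 1"
  proof (cases "l + 1 = i")
    case True
    then show ?thesis using assms(2,6,9) by auto
  next
    case False
    have mono: "\<forall>j\<in>{1..n}. \<forall>j'\<in>{1..n}. j \<le> j' \<longrightarrow> (h(i := i - 1)) j \<le> (h(i := i - 1)) j'"
      using assms(1) by (simp add: hessenberg_function_def)
    have "h (l + 1) = (h(i := i - 1)) (l + 1)" using False by simp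
    also have "\<dots> \<le> (h(i := i - 1)) i"
      using mono[rule_format, of "l + 1" i] assms(3,4,8) by simp
    finally show ?thesis using assms(6) by simp
  qed
  then show ?thesis
    using assms(4,5,7,8) by (simp add: hessenberg_space_def)
qed

lemma hessenberg_space_lower_diagonal:
  assumes "M \<in> hessenberg_space n h" and "h i = i" and "1 \<le> i"
    and "M $$ (i - 1, i - 1) = 0"
  shows "M \<in> hessenberg_space n (h(i := i - 1))"
proof -
  have "M $$ (k, l) = 0"
    if "k < n" "l < n" "(h(i := i - 1)) (l + 1) < k + 1" for k l
  proof (cases "l + 1 = i")
    case True
    then have "i - 1 \<le> k" "l = i - 1" using that(3) by auto
    then show ?thesis
      using assms True that(1,2) by (cases "k = i - 1") (auto simp: hessenberg_space_def)
  next
    case False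
    then show ?thesis using assms(1) that by (auto simp: hessenberg_space_def)
  qed
  with assms(1) show ?thesis
    by (auto simp: hessenberg_space_def)
qed

theorem mainTheorem1:
  fixes n i :: nat and X :: "complex mat" and h :: "nat \<Rightarrow> nat"
  assumes "n \<ge> 1"
    and "nilpotent_mat n X"
    and "1 \<le> i" and "i \<le> n"
    and "hessenberg_function n h"
    and "h i = i"
    and "hessenberg_function n (h(i := i - 1))"
  shows "hessenberg_variety n X h = hessenberg_variety n X (h(i := i - 1))"
proof -
  have "hessenberg_space n (h(i := i - 1)) \<subseteq> hessenberg_space n h"
    using assms(6) by (intro hessenberg_space_mono) auto
  moreover have "M \<in> hessenberg_space n (h(i := i - 1))"
    if g: "g \<in> GL n" and M: "M = mat_inv g * X * g" and MH: "M \<in> hessenberg_space n h" for g M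
  proof -
    have "M $$ (i - 1, i - 1) = 0"
    proof (rule nilpotent_corner_entry_eq_0)
      show "nilpotent_mat n M"
        unfolding M by (rule nilpotent_mat_conjugate[OF assms(2) g])
      show "i - 1 < n" using assms(3,4) by simp
    qed (rule hessenberg_space_corner_block[OF assms(7,6,3,4) MH])
    then show ?thesis
      using hessenberg_space_lower_diagonal[OF MH assms(6,3)] by simp
  qed
  ultimately show ?thesis
    unfolding hessenberg_variety_def by blast
qed

end
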